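(* Let $0<\varepsilon_0\le1$, $N\ge1$, and for $m=1,\dots,N$ let $A_m$ be an $(h_{A_m},k_{A_m},\delta_{A_m},G_{A_m},\varepsilon_{A_m})$-expansion with coefficients $a_{A_m,l}$, $h_{A_m}\le l\le k_{A_m}$ (set $a_{A_m,l}=0$ outside this range). Then for every $n=1,\dots,N$: (i) $B_n=A_1+\cdots+A_n$ is an $(h_{B_n},k_{B_n},\delta_{B_n},G_{B_n},\varepsilon_{B_n})$-expansion with $h_{B_n}=\min_{m\le n}h_{A_m}$, $k_{B_n}=\min_{m\le n}k_{A_m}$, coefficients $b_{l,n}=\sum_{m=1}^n a_{A_m,l}$, $\delta_{B_n}=\min_{m\in\mathbb{K}_n}\delta_{A_m}\ \ (\ge\min_{1\le m\le n}\delta_{A_m})$ where $\mathbb{K}_n=\{m\le n: k_{A_m}=\min(k_{A_1},\dots,k_{A_n})\}$, $\varepsilon_{B_n}=\min(\varepsilon_{A_1},\dots,\varepsilon_{A_n})$, and $G_{B_n}=\sum_{1\le i\le n}\Big(G_{A_i}\varepsilon_{B_n}^{k_{A_i}+\delta_{A_i}-k_{B_n}-\delta_{B_n}}+\sum_{k_{B_n}<j\le k_{A_i}}|a_{A_i,j}|\varepsilon_{B_n}^{j-k_{B_n}-\delta_{B_n}}\Big)$. (ii) $C_n=A_1\times\cdots\times A_n$ is an $(h_{C_n},k_{C_n},\delta_{C_n},G_{C_n},\varepsilon_{C_n})$-expansion with $h_{C_n}=\sum_{m\le n}h_{A_m}$, $k_{C_n}=\min_{1\le l\le n}\big(k_{A_l}+\sum_{r\le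 n,r\ne l}h_{A_r}\big)$, coefficients $c_{r,n}=\sum_{l_1+\cdots+l_n=r,\ h_{A_i}\le l_i\le k_{A_i}}\prod_{i=1}^n a_{A_i,l_i}$, $\delta_{C_n}=\min_{m\in\mathbb{L}_n}\delta_{A_m}\ (\ge\min_{1\le m\le n}\delta_{A_m})$ where $\mathbb{L}_n=\{m\le n: k_{A_m}+\sum_{r\le n,r\ne m}h_{A_r}=k_{C_n}\}$, $\varepsilon_{C_n}=\min_{i\le n}\varepsilon_{A_i}$, and $G_{C_n}=\sum_{k_{C_n}<l_1+\cdots+l_n,\ h_{A_i}\le l_i\le k_{A_i}}\prod_{i=1}^n|a_{A_i,l_i}|\,\varepsilon_{C_n}^{l_1+\cdots+l_n-k_{C_n}-\delta_{C_n}}+\sum_{1\le j\le n}\prod_{1\le i\le n,i\ne j}\Big(\sum_{h_{A_i}\le l\le k_{A_i}}|a_{A_i,l}|\varepsilon_{C_n}^{l}+G_{A_i}\varepsilon_{C_n}^{k_{A_i}+\delta_{A_i}}\Big)G_{A_j}\varepsilon_{C_n}^{k_{A_j}+\delta_{A_j}-k_{C_n}-\delta_{C_n}}$. (iii) The parameters $\delta_{B_n},G_{B_n},\varepsilon_{B_n}$ and $\delta_{C_n},G_{C_n},\varepsilon_{C_n}$ are invariant under any permutation of the summands, respectively factors.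
   Context: Let $0<\varepsilon_0\le1$. A function $A:(0,\varepsilon_0]\to\mathbb{R}$ is an $(h,k,\delta,G,\varepsilon_A)$-expansion with coefficients $a_h,\dots,a_k$ (integers $h\le k$, reals $a_l$, $\delta\in(0,1]$, $G\in(0,\infty)$, $\varepsilon_A\in(0,\varepsilon_0]$) if the remainder $o_A(\varepsilon):=A(\varepsilon)-\sum_{l=h}^k a_l\varepsilon^l$ satisfies $|o_A(\varepsilon)|\le G\varepsilon^{k+\delta}$ for $0<\varepsilon\le\varepsilon_A$. *)

theory Defs
  imports "HOL-Analysis.Analysis" "HOL-Combinatorics.Permutations"
begin

definition expansion ::
  "real \<Rightarrow> (real \<Rightarrow> real) \<Rightarrow> int \<Rightarrow> int \<Rightarrow> real \<Rightarrow> real \<Rightarrow> real \<Rightarrow> (int \<Rightarrow> real) \<Rightarrow> bool" where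
  "expansion eps0 A h k \<delta> G epsA a \<longleftrightarrow>
     h \<le> k \<and> 0 < \<delta> \<and> \<delta> \<le> 1 \<and> 0 < G \<and> 0 < epsA \<and> epsA \<le> eps0 \<and>
     (\<forall>\<epsilon>. 0 < \<epsilon> \<and> \<epsilon> \<le> epsA \<longrightarrow>
        \<bar>A \<epsilon> - (\<Sum>l=h..k. a l * \<epsilon> powr of_int l)\<bar> \<le> G * \<epsilon> powr (of_int k + \<delta>))"

definition coef_ext :: "int \<Rightarrow> int \<Rightarrow> (int \<Rightarrow> real) \<Rightarrow> int \<Rightarrow> real" where
  "coef_ext h k a l = (if h \<le> l \<and> l \<le> k then a l else 0)"

definition sumB_h :: "nat \<Rightarrow> (nat \<Rightarrow> int) \<Rightarrow> int" where
  "sumB_h n hA = Min (hA ` {1..n})"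

definition sumB_k :: "nat \<Rightarrow> (nat \<Rightarrow> int) \<Rightarrow> int" where
  "sumB_k n kA = Min (kA ` {1..n})"

definition sumB_K :: "nat \<Rightarrow> (nat \<Rightarrow> int) \<Rightarrow> nat set" where
  "sumB_K n kA = {m \<in> {1..n}. kA m = sumB_k n kA}"

definition sumB_delta :: "nat \<Rightarrow> (nat \<Rightarrow> int) \<Rightarrow> (nat \<Rightarrow> real) \<Rightarrow> real" where
  "sumB_delta n kA \<delta>A = Min (\<delta>A ` sumB_K n kA)"

definition sumB_eps :: "nat \<Rightarrow> (nat \<Rightarrow> real) \<Rightarrow> real" where
  "sumB_eps n epsA = Min (epsA ` {1..n})"

definition sumB_coef :: "nat \<Rightarrow> (nat \<Rightarrow> int) \<Rightarrow> (nat \<Rightarrow> int) \<Rightarrow> (nat \<Rightarrow> int \<Rightarrow> real) \<Rightarrow> int \<Rightarrow> real" where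
  "sumB_coef n hA kA a l = (\<Sum>m=1..n. coef_ext (hA m) (kA m) (a m) l)"

definition sumB_G :: "nat \<Rightarrow> (nat \<Rightarrow> int) \<Rightarrow> (nat \<Rightarrow> int) \<Rightarrow> (nat \<Rightarrow> real) \<Rightarrow> (nat \<Rightarrow> real)
    \<Rightarrow> (nat \<Rightarrow> real) \<Rightarrow> (nat \<Rightarrow> int \<Rightarrow> real) \<Rightarrow> real" where
  "sumB_G n hA kA \<delta>A GA epsA a =
     (let kB = sumB_k n kA; \<delta>B = sumB_delta n kA \<delta>A; eB = sumB_eps n epsA in
      (\<Sum>i=1..n. GA i * eB powr (of_int (kA i) + \<delta>A i - of_int kB - \<delta>B)
         + (\<Sum>j\<in>{kB<..kA i}. \<bar>coef_ext (hA i) (kA i) (a i) j\<bar> * eB powr (of_int j - of_int kB - \<delta>B))))"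

definition prodC_h :: "nat \<Rightarrow> (nat \<Rightarrow> int) \<Rightarrow> int" where
  "prodC_h n hA = (\<Sum>m=1..n. hA m)"

definition prodC_k :: "nat \<Rightarrow> (nat \<Rightarrow> int) \<Rightarrow> (nat \<Rightarrow> int) \<Rightarrow> int" where
  "prodC_k n hA kA = Min ((\<lambda>l. kA l + (\<Sum>r\<in>{1..n} - {l}. hA r)) ` {1..n})"

definition prodC_L :: "nat \<Rightarrow> (nat \<Rightarrow> int) \<Rightarrow> (nat \<Rightarrow> int) \<Rightarrow> nat set" where
  "prodC_L n hA kA = {m \<in> {1..n}. kA m + (\<Sum>r\<in>{1..n} - {m}. hA r) = prodC_k n hA kA}"

definition prodC_delta :: "nat \<Rightarrow> (nat \<Rightarrow> int) \<Rightarrow> (nat \<Rightarrow> int) \<Rightarrow> (nat \<Rightarrow> real) \<Rightarrow> real" where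
  "prodC_delta n hA kA \<delta>A = Min (\<delta>A ` prodC_L n hA kA)"

definition prodC_eps :: "nat \<Rightarrow> (nat \<Rightarrow> real) \<Rightarrow> real" where
  "prodC_eps n epsA = Min (epsA ` {1..n})"

definition tuples :: "nat \<Rightarrow> (nat \<Rightarrow> int) \<Rightarrow> (nat \<Rightarrow> int) \<Rightarrow> (nat \<Rightarrow> int) set" where
  "tuples n hA kA = PiE {1..n} (\<lambda>i. {hA i..kA i})"

definition prodC_coef :: "nat \<Rightarrow> (nat \<Rightarrow> int) \<Rightarrow> (nat \<Rightarrow> int) \<Rightarrow> (nat \<Rightarrow> int \<Rightarrow> real) \<Rightarrow> int \<Rightarrow> real" where
  "prodC_coef n hA kA a r =
     (\<Sum>l\<in>{l \<in> tuples n hA kA. (\<Sum>i=1..n. l i) = r}. \<Prod>i=1..n. a i (l i))"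

definition prodC_G :: "nat \<Rightarrow> (nat \<Rightarrow> int) \<Rightarrow> (nat \<Rightarrow> int) \<Rightarrow> (nat \<Rightarrow> real) \<Rightarrow> (nat \<Rightarrow> real)
    \<Rightarrow> (nat \<Rightarrow> real) \<Rightarrow> (nat \<Rightarrow> int \<Rightarrow> real) \<Rightarrow> real" where
  "prodC_G n hA kA \<delta>A GA epsA a =
     (let kC = prodC_k n hA kA; \<delta>C = prodC_delta n hA kA \<delta>A; eC = prodC_eps n epsA in
      (\<Sum>l\<in>{l \<in> tuples n hA kA. kC < (\<Sum>i=1..n. l i)}.
          (\<Prod>i=1..n. \<bar>a i (l i)\<bar>) * eC powr (of_int (\<Sum>i=1..n. l i) - of_int kC - \<delta>C))
      + (\<Sum>j=1..n. (\<Prod>i\<in>{1..n} - {j}.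
             (\<Sum>l=hA i..kA i. \<bar>a i l\<bar> * eC powr of_int l) + GA i * eC powr (of_int (kA i) + \<delta>A i))
           * GA j * eC powr (of_int (kA j) + \<delta>A j - of_int kC - \<delta>C)))"

end

theory Submission
  imports Defs
begin

text \<open>For the sum, each \<open>A\<^sub>m\<close> is re-expanded to the common order \<open>k\<^sub>B\<close>: its coefficients of
  order \<open>j\<close> with \<open>k\<^sub>B < j \<le> k\<^sub>A\<^sub>m\<close> are absorbed into the remainder using
  \<open>\<epsilon>\<^sup>j \<le> \<epsilon>\<^bsup>k\<^sub>B+\<delta>\<^sub>B\<^esup> \<epsilon>\<^sub>B\<^bsup>j-k\<^sub>B-\<delta>\<^sub>B\<^esup>\<close> for \<open>\<epsilon> \<le> \<epsilon>\<^sub>B\<close>, and \<open>\<delta>\<^sub>B\<close> is chosen so that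
  \<open>k\<^sub>B + \<delta>\<^sub>B \<le> k\<^sub>A\<^sub>m + \<delta>\<^sub>A\<^sub>m\<close> for every \<open>m\<close>. For the product, multiplying out the
  polynomial parts \<open>P\<^sub>i\<close> yields the coefficients \<open>c\<^sub>r\<close>, the monomials of degree above \<open>k\<^sub>C\<close>
  being absorbed in the same way, while the telescoping bound
  \<open>|\<Prod>x\<^sub>i - \<Prod>y\<^sub>i| \<le> \<Sum>\<^sub>j |x\<^sub>j - y\<^sub>j| \<Prod>\<^sub>i\<^sub>\<noteq>\<^sub>j M\<^sub>i\<close> with \<open>|A\<^sub>i|, |P\<^sub>i| \<le> M\<^sub>i = O(\<epsilon>\<^bsup>h\<^sub>i\<^esup>)\<close>
  controls \<open>\<Prod>A\<^sub>i - \<Prod>P\<^sub>i\<close>. All parameters are symmetric in the index, whence the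
  permutation invariance.\<close>

lemma powr_le_powr_mult_powr_diff:
  fixes \<epsilon> e x y :: real
  assumes "0 < \<epsilon>" "\<epsilon> \<le> e" "x \<le> y"
  shows "\<epsilon> powr y \<le> \<epsilon> powr x * e powr (y - x)"
proof -
  have "\<epsilon> powr y = \<epsilon> powr x * \<epsilon> powr (y - x)"
    by (simp add: powr_add[symmetric])
  also have "\<dots> \<le> \<epsilon> powr x * e powr (y - x)"
    using assms by (intro mult_left_mono powr_mono2) auto
  finally show ?thesis .
qed

lemma powr_of_int_le_above_order:
  fixes \<epsilon> e \<delta> :: real and K j :: int
  assumes "0 < \<epsilon>" "\<epsilon> \<le> e" "\<delta> \<le> 1" "K < j"
  shows "\<epsilon> powr of_int j \<le> \<epsilon> powr (of_int K + \<delta>) * e powr (of_int j - of_int K - \<delta>)"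
  using powr_le_powr_mult_powr_diff[OF assms(1,2), of "of_int K + \<delta>" "of_int j"] assms(3,4)
  by (simp add: diff_diff_eq)

lemma abs_sum_powr_above_order_le:
  fixes \<epsilon> e \<delta> :: real and K :: int and c :: "'a \<Rightarrow> real" and d :: "'a \<Rightarrow> int"
  assumes "0 < \<epsilon>" "\<epsilon> \<le> e" "\<delta> \<le> 1" "\<forall>x\<in>S. K < d x"
  shows "\<bar>\<Sum>x\<in>S. c x * \<epsilon> powr of_int (d x)\<bar>
    \<le> \<epsilon> powr (of_int K + \<delta>) * (\<Sum>x\<in>S. \<bar>c x\<bar> * e powr (of_int (d x) - of_int K - \<delta>))"
proof -
  have "\<bar>c x\<bar> * \<epsilon> powr of_int (d x)
      \<le> \<epsilon> powr (of_int K + \<delta>) * (\<bar>c x\<bar> * e powr (of_int (d x) - of_int K - \<delta>))" if "x \<in> S" for x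
    using mult_left_mono[OF powr_of_int_le_above_order[OF assms(1-3)], of K "d x" "\<bar>c x\<bar>"]
      assms(4) that by (simp add: ac_simps)
  then show ?thesis
    unfolding sum_distrib_left
    by (intro order_trans[OF sum_abs] sum_mono) (simp add: abs_mult)
qed

lemma powr_le_divide_powr_mult_powr:
  fixes \<epsilon> e x h :: real
  assumes "0 < \<epsilon>" "\<epsilon> \<le> e" "h \<le> x"
  shows "\<epsilon> powr x \<le> (\<epsilon> / e) powr h * e powr x"
  using powr_le_powr_mult_powr_diff[OF assms] assms(1,2)
  by (simp add: powr_divide powr_diff)

lemma powr_mult_divide_powr_le:
  fixes \<epsilon> e x s y :: real
  assumes "0 < \<epsilon>" "\<epsilon> \<le> e" "y \<le> x + s"
  shows "\<epsilon> powr x * (\<epsilon> / e) powr s \<le> \<epsilon> powr y * e powr (x - y)"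
proof -
  have "\<epsilon> powr x * (\<epsilon> / e) powr s = \<epsilon> powr (x + s) / e powr s"
    using assms(1,2) by (simp add: powr_divide powr_add)
  also have "\<dots> \<le> \<epsilon> powr y * e powr (x + s - y) / e powr s"
    using powr_le_powr_mult_powr_diff[OF assms] by (simp add: divide_right_mono)
  also have "\<dots> = \<epsilon> powr y * e powr (x - y)"
    using assms(1,2) by (simp add: powr_diff powr_add)
  finally show ?thesis .
qed

lemma abs_prod_diff_le:
  fixes x y M :: "'a \<Rightarrow> real"
  assumes "finite S" "\<And>i. i \<in> S \<Longrightarrow> \<bar>x i\<bar> \<le> M i" "\<And>i. i \<in> S \<Longrightarrow> \<bar>y i\<bar> \<le> M i"
  shows "\<bar>prod x S - prod y S\<bar> \<le> (\<Sum>j\<in>S. \<bar>x j - y j\<bar> * prod M (S - {j}))"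
  using assms
proof (induction S rule: finite_induct)
  case empty
  then show ?case by simp
next
  case (insert b S)
  have IH: "\<bar>prod x S - prod y S\<bar> \<le> (\<Sum>j\<in>S. \<bar>x j - y j\<bar> * prod M (S - {j}))"
    using insert by auto
  have Mb: "\<bar>x b\<bar> \<le> M b" "\<bar>y b\<bar> \<le> M b"
    using insert by auto
  have "\<bar>prod x S\<bar> \<le> prod M S"
    unfolding abs_prod using insert by (intro prod_mono) auto
  moreover have "prod x (insert b S) - prod y (insert b S)
      = (x b - y b) * prod x S + y b * (prod x S - prod y S)"
    using insert by (simp add: algebra_simps)
  ultimately have "\<bar>prod x (insert b S) - prod y (insert b S)\<bar>
      \<le> \<bar>x b - y b\<bar> * prod M S + M b * (\<Sum>j\<in>S. \<bar>x j - y j\<bar> * prod M (S - {j}))"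
    using IH Mb by (auto simp: abs_mult intro!: order_trans[OF abs_triangle_ineq] add_mono mult_mono
        intro: order_trans[OF abs_ge_zero Mb(1)])
  also have "M b * (\<Sum>j\<in>S. \<bar>x j - y j\<bar> * prod M (S - {j}))
      = (\<Sum>j\<in>S. \<bar>x j - y j\<bar> * prod M (insert b S - {j}))"
    unfolding sum_distrib_left using insert
    by (intro sum.cong refl) (auto simp: insert_Diff_if)
  finally show ?case
    using insert by (simp add: insert_Diff_if)
qed

text \<open>Both \<open>\<delta>\<^sub>B\<close> and \<open>\<delta>\<^sub>C\<close> are of this form, for the orders \<open>\<kappa> m = k\<^sub>m\<close> and
  \<open>\<kappa> m = k\<^sub>m + \<Sum>\<^sub>r\<^sub>\<noteq>\<^sub>m h\<^sub>r\<close> respectively.\<close>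
definition leading_delta :: "'a set \<Rightarrow> ('a \<Rightarrow> int) \<Rightarrow> ('a \<Rightarrow> real) \<Rightarrow> real" where
  "leading_delta I \<kappa> \<delta> = Min (\<delta> ` {m \<in> I. \<kappa> m = Min (\<kappa> ` I)})"

lemma leading_delta_in_image:
  assumes "finite I" "I \<noteq> {}"
  shows "leading_delta I \<kappa> \<delta> \<in> \<delta> ` I"
proof -
  have "Min (\<kappa> ` I) \<in> \<kappa> ` I"
    using assms by simp
  then obtain m where "m \<in> I" "\<kappa> m = Min (\<kappa> ` I)"
    by auto
  then have "leading_delta I \<kappa> \<delta> \<in> \<delta> ` {m \<in> I. \<kappa> m = Min (\<kappa> ` I)}"
    unfolding leading_delta_def using assms(1) by (intro Min_in) auto
  then show ?thesis by auto
qed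

lemma Min_le_leading_delta:
  assumes "finite I" "I \<noteq> {}"
  shows "Min (\<delta> ` I) \<le> leading_delta I \<kappa> \<delta>"
  using leading_delta_in_image[OF assms] assms(1) by simp

lemma leading_delta_bounds:
  assumes "finite I" "I \<noteq> {}" and "\<And>i. i \<in> I \<Longrightarrow> 0 < \<delta> i \<and> \<delta> i \<le> 1"
  shows "0 < leading_delta I \<kappa> \<delta>" "leading_delta I \<kappa> \<delta> \<le> 1"
  using leading_delta_in_image[OF assms(1,2), of \<kappa> \<delta>] assms(3) by auto

lemma Min_add_leading_delta_le:
  assumes "finite I" "m \<in> I" and "\<And>i. i \<in> I \<Longrightarrow> 0 < \<delta> i \<and> \<delta> i \<le> 1"
  shows "of_int (Min (\<kappa> ` I)) + leading_delta I \<kappa> \<delta> \<le> of_int (\<kappa> m) + \<delta> m"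
proof (cases "\<kappa> m = Min (\<kappa> ` I)")
  case True
  then have "leading_delta I \<kappa> \<delta> \<le> \<delta> m"
    unfolding leading_delta_def using assms(1,2) by (intro Min_le) auto
  then show ?thesis using True by simp
next
  case False
  moreover have "Min (\<kappa> ` I) \<le> \<kappa> m"
    using assms(1,2) by simp
  ultimately have "Min (\<kappa> ` I) + 1 \<le> \<kappa> m"
    by linarith
  then have "of_int (Min (\<kappa> ` I)) + 1 \<le> (of_int (\<kappa> m) :: real)"
    by (metis of_int_1 of_int_add of_int_le_iff)
  moreover have "leading_delta I \<kappa> \<delta> \<le> 1"
    using leading_delta_bounds(2)[of I \<delta>] assms by blast
  ultimately show ?thesis
    using assms(2,3) by fastforce
qed

lemma image_comp_permutes: "\<sigma> permutes I \<Longrightarrow> (f \<circ> \<sigma>) ` I = f ` I"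
  by (metis image_comp permutes_image)

lemma leading_delta_permute:
  assumes "\<sigma> permutes I"
  shows "leading_delta I (\<kappa> \<circ> \<sigma>) (\<delta> \<circ> \<sigma>) = leading_delta I \<kappa> \<delta>"
proof -
  have "\<sigma> ` {m \<in> I. \<kappa> (\<sigma> m) = c} = {m \<in> I. \<kappa> m = c}" for c
    using assms permutes_inverses(1)[OF assms]
    by (auto simp: permutes_in_image image_iff) (metis permutes_in_image permutes_inv)
  then show ?thesis
    unfolding leading_delta_def image_comp_permutes[OF assms] image_comp[symmetric]
    by (simp add: permutes_image[OF assms])
qed

lemma expansion_remainder_le:
  "expansion eps0 A h k \<delta> G epsA a \<Longrightarrow> 0 < \<epsilon> \<Longrightarrow> \<epsilon> \<le> epsA \<Longrightarrow>
    \<bar>A \<epsilon> - (\<Sum>l=h..k. a l * \<epsilon> powr of_int l)\<bar> \<le> G * \<epsilon> powr (of_int k + \<delta>)"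
  by (simp add: expansion_def)

lemma expansion_truncate_remainder_le:
  assumes exp: "expansion eps0 A h k \<delta> G epsA a"
    and "h' \<le> h" "h' \<le> k'" "k' \<le> k" "\<delta>' \<le> 1" "of_int k' + \<delta>' \<le> of_int k + \<delta>"
    and \<epsilon>: "0 < \<epsilon>" "\<epsilon> \<le> e" "e \<le> epsA"
  shows "\<bar>A \<epsilon> - (\<Sum>l=h'..k'. coef_ext h k a l * \<epsilon> powr of_int l)\<bar>
    \<le> (G * e powr (of_int k + \<delta> - of_int k' - \<delta>')
        + (\<Sum>j\<in>{k'<..k}. \<bar>coef_ext h k a j\<bar> * e powr (of_int j - of_int k' - \<delta>')))
      * \<epsilon> powr (of_int k' + \<delta>')"
proof -
  define c where "c = coef_ext h k a"
  have "(\<Sum>l=h..k. a l * \<epsilon> powr of_int l) = (\<Sum>l=h'..k. c l * \<epsilon> powr of_int l)"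
    using assms(2) by (intro sum.mono_neutral_cong_left) (auto simp: c_def coef_ext_def)
  also have "\<dots> = (\<Sum>l=h'..k'. c l * \<epsilon> powr of_int l) + (\<Sum>l\<in>{k'<..k}. c l * \<epsilon> powr of_int l)"
  proof -
    have "{h'..k} = {h'..k'} \<union> {k'<..k}" using assms(3,4) by auto
    then show ?thesis by (simp only:) (rule sum.union_disjoint; auto)
  qed
  finally have "A \<epsilon> - (\<Sum>l=h'..k'. c l * \<epsilon> powr of_int l)
      = (A \<epsilon> - (\<Sum>l=h..k. a l * \<epsilon> powr of_int l)) + (\<Sum>l\<in>{k'<..k}. c l * \<epsilon> powr of_int l)"
    by simp
  also have "\<bar>\<dots>\<bar> \<le> G * \<epsilon> powr (of_int k + \<delta>)
      + \<epsilon> powr (of_int k' + \<delta>') * (\<Sum>l\<in>{k'<..k}. \<bar>c l\<bar> * e powr (of_int l - of_int k' - \<delta>'))"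
    using expansion_remainder_le[OF exp \<epsilon>(1)] \<epsilon> assms(5)
      abs_sum_powr_above_order_le[of \<epsilon> e \<delta>' "{k'<..k}" k' id c]
    by (intro order_trans[OF abs_triangle_ineq] add_mono) auto
  also have "G * \<epsilon> powr (of_int k + \<delta>)
      \<le> G * (\<epsilon> powr (of_int k' + \<delta>') * e powr (of_int k + \<delta> - (of_int k' + \<delta>')))"
    using exp \<epsilon> assms(6)
    by (intro mult_left_mono powr_le_powr_mult_powr_diff) (auto simp: expansion_def)
  finally show ?thesis
    by (simp add: c_def algebra_simps)
qed

lemma sumB_delta_eq_leading_delta: "sumB_delta n kA \<delta>A = leading_delta {1..n} kA \<delta>A"
  by (simp add: sumB_delta_def sumB_K_def sumB_k_def leading_delta_def)

lemma sumB_h_le_sumB_k: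
  assumes "1 \<le> n" "\<forall>m\<in>{1..n}. hA m \<le> kA m"
  shows "sumB_h n hA \<le> sumB_k n kA"
proof -
  have "sumB_k n kA \<in> kA ` {1..n}"
    using assms(1) by (simp add: sumB_k_def)
  then obtain m where "m \<in> {1..n}" "kA m = sumB_k n kA"
    by auto
  moreover have "sumB_h n hA \<le> hA m"
    using \<open>m \<in> {1..n}\<close> by (simp add: sumB_h_def)
  ultimately show ?thesis
    using assms(2) by fastforce
qed

lemma sum_expansions_remainder_le:
  fixes k :: int and \<delta> :: real
  assumes "finite I"
    and exp: "\<forall>m\<in>I. expansion eps0 (A m) (hA m) (kA m) (\<delta>A m) (GA m) (epsA m) (a m)"
    and "h \<le> k" "\<delta> \<le> 1"
    and le: "\<forall>m\<in>I. h \<le> hA m \<and> k \<le> kA m \<and> e \<le> epsA m"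
    and order: "\<forall>m\<in>I. of_int k + \<delta> \<le> of_int (kA m) + \<delta>A m"
    and \<epsilon>: "0 < \<epsilon>" "\<epsilon> \<le> e"
  shows "\<bar>(\<Sum>m\<in>I. A m \<epsilon>)
      - (\<Sum>l=h..k. (\<Sum>m\<in>I. coef_ext (hA m) (kA m) (a m) l) * \<epsilon> powr of_int l)\<bar>
    \<le> (\<Sum>i\<in>I. GA i * e powr (of_int (kA i) + \<delta>A i - of_int k - \<delta>)
        + (\<Sum>j\<in>{k<..kA i}. \<bar>coef_ext (hA i) (kA i) (a i) j\<bar> * e powr (of_int j - of_int k - \<delta>)))
      * \<epsilon> powr (of_int k + \<delta>)"
proof -
  have "(\<Sum>l=h..k. (\<Sum>m\<in>I. coef_ext (hA m) (kA m) (a m) l) * \<epsilon> powr of_int l)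
      = (\<Sum>m\<in>I. \<Sum>l=h..k. coef_ext (hA m) (kA m) (a m) l * \<epsilon> powr of_int l)"
    by (simp add: sum_distrib_right sum.swap[of _ "{h..k}"])
  then have "\<bar>(\<Sum>m\<in>I. A m \<epsilon>)
      - (\<Sum>l=h..k. (\<Sum>m\<in>I. coef_ext (hA m) (kA m) (a m) l) * \<epsilon> powr of_int l)\<bar>
      = \<bar>\<Sum>m\<in>I. A m \<epsilon> - (\<Sum>l=h..k. coef_ext (hA m) (kA m) (a m) l * \<epsilon> powr of_int l)\<bar>"
    by (simp add: sum_subtractf)
  also have "\<dots> \<le> (\<Sum>i\<in>I. (GA i * e powr (of_int (kA i) + \<delta>A i - of_int k - \<delta>)
        + (\<Sum>j\<in>{k<..kA i}. \<bar>coef_ext (hA i) (kA i) (a i) j\<bar> * e powr (of_int j - of_int k - \<delta>)))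
      * \<epsilon> powr (of_int k + \<delta>))"
    using assms(3,4) le order \<epsilon> exp
    by (intro order_trans[OF sum_abs] sum_mono expansion_truncate_remainder_le) auto
  finally show ?thesis
    by (simp add: sum_distrib_right)
qed

lemma expansion_sum:
  assumes "1 \<le> n"
    and exp: "\<forall>m\<in>{1..n}. expansion eps0 (A m) (hA m) (kA m) (\<delta>A m) (GA m) (epsA m) (a m)"
  shows "expansion eps0 (\<lambda>\<epsilon>. \<Sum>m=1..n. A m \<epsilon>) (sumB_h n hA) (sumB_k n kA)
    (sumB_delta n kA \<delta>A) (sumB_G n hA kA \<delta>A GA epsA a) (sumB_eps n epsA) (sumB_coef n hA kA a)"
proof -
  let ?I = "{1..n}"
  define hB kB \<delta>B eB
    where "hB = sumB_h n hA" and "kB = sumB_k n kA" and "\<delta>B = sumB_delta n kA \<delta>A"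
      and "eB = sumB_eps n epsA"
  have I: "finite ?I" "?I \<noteq> {}"
    using assms(1) by auto
  have par: "hA m \<le> kA m \<and> 0 < \<delta>A m \<and> \<delta>A m \<le> 1 \<and> 0 < GA m \<and> 0 < epsA m \<and> epsA m \<le> eps0"
    if "m \<in> ?I" for m
    using exp that by (simp add: expansion_def)
  have le: "\<forall>m\<in>?I. hB \<le> hA m \<and> kB \<le> kA m \<and> eB \<le> epsA m"
    by (simp add: hB_def kB_def eB_def sumB_h_def sumB_k_def sumB_eps_def)
  have hB_le_kB: "hB \<le> kB"
    unfolding hB_def kB_def using assms(1) par by (intro sumB_h_le_sumB_k) auto
  have "eB \<in> epsA ` ?I"
    unfolding eB_def sumB_eps_def using I by simp
  then have eB: "0 < eB" "eB \<le> eps0"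
    using par by auto
  have \<delta>B: "0 < \<delta>B" "\<delta>B \<le> 1"
    unfolding \<delta>B_def sumB_delta_eq_leading_delta
    using leading_delta_bounds[OF I, where \<delta> = \<delta>A and \<kappa> = kA] par by auto
  have order_le: "\<forall>m\<in>?I. of_int kB + \<delta>B \<le> of_int (kA m) + \<delta>A m"
    using Min_add_leading_delta_le[OF I(1), of _ \<delta>A kA] par
    unfolding kB_def \<delta>B_def sumB_delta_eq_leading_delta sumB_k_def by blast
  have "0 < sumB_G n hA kA \<delta>A GA epsA a"
    unfolding sumB_G_def Let_def kB_def[symmetric] \<delta>B_def[symmetric] eB_def[symmetric]
    using I par eB by (intro sum_pos add_pos_nonneg sum_nonneg) auto
  then show ?thesis
    unfolding expansion_def sumB_coef_def
    using hB_le_kB \<delta>B eB sum_expansions_remainder_le[OF I(1) exp hB_le_kB \<delta>B(2) le order_le]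
    by (simp add: hB_def kB_def \<delta>B_def eB_def sumB_G_def Let_def)
qed

lemma expansion_abs_le:
  assumes exp: "expansion eps0 A h k \<delta> G epsA a" and \<epsilon>: "0 < \<epsilon>" "\<epsilon> \<le> e" "e \<le> epsA"
  defines "F \<equiv> (\<Sum>l=h..k. \<bar>a l\<bar> * e powr of_int l) + G * e powr (of_int k + \<delta>)"
  shows "\<bar>A \<epsilon>\<bar> \<le> (\<epsilon> / e) powr of_int h * F"
    and "\<bar>\<Sum>l=h..k. a l * \<epsilon> powr of_int l\<bar> \<le> (\<epsilon> / e) powr of_int h * F"
proof -
  define P where "P = (\<Sum>l=h..k. a l * \<epsilon> powr of_int l)"
  have par: "h \<le> k" "0 < \<delta>" "0 < G"
    using exp by (simp_all add: expansion_def)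
  have P_le: "\<bar>P\<bar> \<le> (\<Sum>l=h..k. \<bar>a l\<bar> * \<epsilon> powr of_int l)"
    unfolding P_def by (rule order_trans[OF sum_abs]) (simp add: abs_mult)
  have "(\<Sum>l=h..k. \<bar>a l\<bar> * \<epsilon> powr of_int l) + G * \<epsilon> powr (of_int k + \<delta>)
      \<le> (\<Sum>l=h..k. \<bar>a l\<bar> * ((\<epsilon> / e) powr of_int h * e powr of_int l))
        + G * ((\<epsilon> / e) powr of_int h * e powr (of_int k + \<delta>))"
    using \<epsilon> par by (intro add_mono sum_mono mult_left_mono powr_le_divide_powr_mult_powr) auto
  also have "\<dots> = (\<epsilon> / e) powr of_int h * F"
    unfolding F_def by (simp add: sum_distrib_left algebra_simps)
  finally have f_le: "(\<Sum>l=h..k. \<bar>a l\<bar> * \<epsilon> powr of_int l) + G * \<epsilon> powr (of_int k + \<delta>)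
      \<le> (\<epsilon> / e) powr of_int h * F" .
  have "\<bar>A \<epsilon> - P\<bar> \<le> G * \<epsilon> powr (of_int k + \<delta>)"
    unfolding P_def using expansion_remainder_le[OF exp] \<epsilon> by simp
  then show "\<bar>A \<epsilon>\<bar> \<le> (\<epsilon> / e) powr of_int h * F"
    using P_le f_le by linarith
  moreover have "0 \<le> G * \<epsilon> powr (of_int k + \<delta>)"
    using par(3) by simp
  ultimately show "\<bar>\<Sum>l=h..k. a l * \<epsilon> powr of_int l\<bar> \<le> (\<epsilon> / e) powr of_int h * F"
    using P_le f_le unfolding P_def by linarith
qed

lemma prod_sum_powr_split:
  fixes \<epsilon> :: real and K :: int
  assumes "0 < \<epsilon>"
  shows "(\<Prod>i=1..n. \<Sum>l=hA i..kA i. a i l * \<epsilon> powr of_int l)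
    = (\<Sum>r=prodC_h n hA..K. prodC_coef n hA kA a r * \<epsilon> powr of_int r)
      + (\<Sum>g\<in>{g \<in> tuples n hA kA. K < (\<Sum>i=1..n. g i)}.
          (\<Prod>i=1..n. a i (g i)) * \<epsilon> powr of_int (\<Sum>i=1..n. g i))"
proof -
  define T where "T = tuples n hA kA"
  define X where "X g = (\<Prod>i=1..n. a i (g i)) * \<epsilon> powr of_int (\<Sum>i=1..n. g i)" for g
  have fT: "finite T"
    unfolding T_def tuples_def by (intro finite_PiE) auto
  have "(\<Prod>i=1..n. \<Sum>l=hA i..kA i. a i l * \<epsilon> powr of_int l)
      = (\<Sum>g\<in>T. \<Prod>i=1..n. a i (g i) * \<epsilon> powr of_int (g i))"
    unfolding T_def tuples_def by (intro prod_sum_PiE) auto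
  also have "\<dots> = (\<Sum>g\<in>T. X g)"
    unfolding X_def using assms by (simp add: prod.distrib powr_sum)
  also have "\<dots> = (\<Sum>g\<in>{g\<in>T. (\<Sum>i=1..n. g i) \<le> K}. X g) + (\<Sum>g\<in>{g\<in>T. K < (\<Sum>i=1..n. g i)}. X g)"
    using fT by (subst sum.union_disjoint[symmetric]) (auto intro: sum.cong)
  also have "(\<Sum>g\<in>{g\<in>T. (\<Sum>i=1..n. g i) \<le> K}. X g)
      = (\<Sum>r=prodC_h n hA..K. \<Sum>g\<in>{g\<in>{g\<in>T. (\<Sum>i=1..n. g i) \<le> K}. (\<Sum>i=1..n. g i) = r}. X g)"
  proof (rule sum.group[symmetric])
    show "(\<lambda>g. \<Sum>i=1..n. g i) ` {g\<in>T. (\<Sum>i=1..n. g i) \<le> K} \<subseteq> {prodC_h n hA..K}"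
      unfolding T_def tuples_def prodC_h_def by (auto simp: PiE_iff intro!: sum_mono)
  qed (use fT in auto)
  also have "\<dots> = (\<Sum>r=prodC_h n hA..K. prodC_coef n hA kA a r * \<epsilon> powr of_int r)"
    unfolding prodC_coef_def T_def[symmetric] sum_distrib_right X_def
    by (intro sum.cong refl) (auto intro!: sum.cong)
  finally show ?thesis
    unfolding X_def T_def .
qed

lemma prod_expansions_remainder_le:
  fixes K :: int and \<delta> :: real
  assumes "finite I"
    and exp: "\<forall>m\<in>I. expansion eps0 (A m) (hA m) (kA m) (\<delta>A m) (GA m) (epsA m) (a m)"
    and \<epsilon>: "0 < \<epsilon>" "\<epsilon> \<le> e" "\<forall>m\<in>I. e \<le> epsA m"
    and order: "\<forall>j\<in>I. of_int K + \<delta> \<le> of_int (\<Sum>r\<in>I - {j}. hA r) + (of_int (kA j) + \<delta>A j)"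
  defines "F \<equiv> \<lambda>i. (\<Sum>l=hA i..kA i. \<bar>a i l\<bar> * e powr of_int l) + GA i * e powr (of_int (kA i) + \<delta>A i)"
  shows "\<bar>(\<Prod>m\<in>I. A m \<epsilon>) - (\<Prod>m\<in>I. \<Sum>l=hA m..kA m. a m l * \<epsilon> powr of_int l)\<bar>
    \<le> \<epsilon> powr (of_int K + \<delta>)
      * (\<Sum>j\<in>I. (\<Prod>i\<in>I - {j}. F i) * GA j * e powr (of_int (kA j) + \<delta>A j - of_int K - \<delta>))"
proof -
  define P where "P m = (\<Sum>l=hA m..kA m. a m l * \<epsilon> powr of_int l)" for m
  define M where "M i = (\<epsilon> / e) powr of_int (hA i) * F i" for i
  have A_le: "\<bar>A i \<epsilon>\<bar> \<le> M i" and P_le: "\<bar>P i\<bar> \<le> M i" if "i \<in> I" for i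
    unfolding M_def F_def P_def using expansion_abs_le[of eps0 "A i"] exp \<epsilon> that by auto
  have M_nonneg: "0 \<le> M i" if "i \<in> I" for i
    using P_le[OF that] by linarith
  have "\<bar>(\<Prod>m\<in>I. A m \<epsilon>) - prod P I\<bar> \<le> (\<Sum>j\<in>I. \<bar>A j \<epsilon> - P j\<bar> * prod M (I - {j}))"
    using assms(1) A_le P_le by (rule abs_prod_diff_le)
  also have "\<dots> \<le> (\<Sum>j\<in>I. \<epsilon> powr (of_int K + \<delta>)
      * ((\<Prod>i\<in>I - {j}. F i) * GA j * e powr (of_int (kA j) + \<delta>A j - of_int K - \<delta>)))"
  proof (rule sum_mono)
    fix j assume j: "j \<in> I"
    have par: "0 < GA j"
      using exp j by (simp add: expansion_def)
    have F_nonneg: "0 \<le> prod F (I - {j})"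
      unfolding F_def using exp \<epsilon> by (intro prod_nonneg add_nonneg_nonneg sum_nonneg
          mult_nonneg_nonneg) (auto simp: expansion_def less_imp_le)
    have prod_M: "prod M (I - {j}) = (\<epsilon> / e) powr of_int (\<Sum>r\<in>I - {j}. hA r) * prod F (I - {j})"
      unfolding M_def prod.distrib using \<epsilon> by (simp add: powr_sum)
    have "\<bar>A j \<epsilon> - P j\<bar> \<le> GA j * \<epsilon> powr (of_int (kA j) + \<delta>A j)"
      unfolding P_def using expansion_remainder_le exp \<epsilon> j by fastforce
    then have "\<bar>A j \<epsilon> - P j\<bar> * prod M (I - {j})
        \<le> GA j * \<epsilon> powr (of_int (kA j) + \<delta>A j) * prod M (I - {j})"
      using M_nonneg by (intro mult_right_mono prod_nonneg) auto
    also have "\<dots> = GA j * prod F (I - {j})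
          * (\<epsilon> powr (of_int (kA j) + \<delta>A j) * (\<epsilon> / e) powr of_int (\<Sum>r\<in>I - {j}. hA r))"
      unfolding prod_M by (simp only: ac_simps)
    also have "\<dots> \<le> GA j * prod F (I - {j})
        * (\<epsilon> powr (of_int K + \<delta>) * e powr (of_int (kA j) + \<delta>A j - (of_int K + \<delta>)))"
      using order j \<epsilon> par F_nonneg
      by (intro mult_left_mono powr_mult_divide_powr_le) (auto simp: algebra_simps)
    finally show "\<bar>A j \<epsilon> - P j\<bar> * prod M (I - {j}) \<le> \<epsilon> powr (of_int K + \<delta>)
        * ((\<Prod>i\<in>I - {j}. F i) * GA j * e powr (of_int (kA j) + \<delta>A j - of_int K - \<delta>))"
      by (simp add: algebra_simps)
  qed
  finally show ?thesis
    unfolding P_def by (simp add: sum_distrib_left)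
qed

definition prodC_order :: "nat \<Rightarrow> (nat \<Rightarrow> int) \<Rightarrow> (nat \<Rightarrow> int) \<Rightarrow> nat \<Rightarrow> int" where
  "prodC_order n hA kA l = kA l + (\<Sum>r\<in>{1..n} - {l}. hA r)"

lemma prodC_k_eq_Min_prodC_order: "prodC_k n hA kA = Min (prodC_order n hA kA ` {1..n})"
  by (simp add: prodC_k_def prodC_order_def)

lemma prodC_delta_eq_leading_delta:
  "prodC_delta n hA kA \<delta>A = leading_delta {1..n} (prodC_order n hA kA) \<delta>A"
  by (simp add: prodC_delta_def prodC_L_def prodC_k_eq_Min_prodC_order leading_delta_def
      prodC_order_def)

lemma prodC_h_le_prodC_k:
  assumes "1 \<le> n" "\<forall>m\<in>{1..n}. hA m \<le> kA m"
  shows "prodC_h n hA \<le> prodC_k n hA kA"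
proof -
  have "prodC_k n hA kA \<in> prodC_order n hA kA ` {1..n}"
    unfolding prodC_k_eq_Min_prodC_order using assms(1) by simp
  then obtain j where j: "j \<in> {1..n}" "prodC_k n hA kA = kA j + (\<Sum>r\<in>{1..n} - {j}. hA r)"
    by (auto simp: prodC_order_def)
  moreover have "prodC_h n hA = hA j + (\<Sum>r\<in>{1..n} - {j}. hA r)"
    unfolding prodC_h_def using j(1) by (simp add: sum.remove)
  ultimately show ?thesis
    using assms(2) by simp
qed

lemma prod_expansions_truncate_remainder_le:
  fixes K :: int and \<delta> :: real
  assumes exp: "\<forall>m\<in>{1..n}. expansion eps0 (A m) (hA m) (kA m) (\<delta>A m) (GA m) (epsA m) (a m)"
    and \<epsilon>: "0 < \<epsilon>" "\<epsilon> \<le> e" "\<forall>m\<in>{1..n}. e \<le> epsA m" and "\<delta> \<le> 1"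
    and order: "\<forall>j\<in>{1..n}. of_int K + \<delta> \<le> of_int (\<Sum>r\<in>{1..n} - {j}. hA r) + (of_int (kA j) + \<delta>A j)"
  shows "\<bar>(\<Prod>m=1..n. A m \<epsilon>) - (\<Sum>r=prodC_h n hA..K. prodC_coef n hA kA a r * \<epsilon> powr of_int r)\<bar>
    \<le> \<epsilon> powr (of_int K + \<delta>)
      * ((\<Sum>l\<in>{l \<in> tuples n hA kA. K < (\<Sum>i=1..n. l i)}.
            (\<Prod>i=1..n. \<bar>a i (l i)\<bar>) * e powr (of_int (\<Sum>i=1..n. l i) - of_int K - \<delta>))
        + (\<Sum>j=1..n. (\<Prod>i\<in>{1..n} - {j}.
            (\<Sum>l=hA i..kA i. \<bar>a i l\<bar> * e powr of_int l) + GA i * e powr (of_int (kA i) + \<delta>A i))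
          * GA j * e powr (of_int (kA j) + \<delta>A j - of_int K - \<delta>)))"
proof -
  let ?I = "{1..n}"
  define T where "T = {l \<in> tuples n hA kA. K < (\<Sum>i\<in>?I. l i)}"
  define P where "P m = (\<Sum>l=hA m..kA m. a m l * \<epsilon> powr of_int l)" for m
  define X where "X l = (\<Prod>i\<in>?I. a i (l i)) * \<epsilon> powr of_int (\<Sum>i\<in>?I. l i)" for l
  have above_K: "\<forall>l\<in>T. K < (\<Sum>i\<in>?I. l i)"
    by (simp add: T_def)
  have "(\<Prod>m\<in>?I. A m \<epsilon>) - (\<Sum>r=prodC_h n hA..K. prodC_coef n hA kA a r * \<epsilon> powr of_int r)
      = ((\<Prod>m\<in>?I. A m \<epsilon>) - prod P ?I) + (\<Sum>l\<in>T. X l)"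
    using prod_sum_powr_split[OF \<epsilon>(1), where K = K and hA = hA and kA = kA and a = a]
    unfolding P_def X_def T_def by simp
  moreover note prod_expansions_remainder_le[OF finite_atLeastAtMost exp \<epsilon> order, folded P_def]
  moreover note abs_sum_powr_above_order_le[OF \<epsilon>(1,2) assms(5) above_K,
      of "\<lambda>l. \<Prod>i\<in>?I. a i (l i)", folded X_def, unfolded abs_prod]
  ultimately show ?thesis
    unfolding T_def by (simp add: algebra_simps)
qed

lemma expansion_prod:
  assumes "1 \<le> n"
    and exp: "\<forall>m\<in>{1..n}. expansion eps0 (A m) (hA m) (kA m) (\<delta>A m) (GA m) (epsA m) (a m)"
  shows "expansion eps0 (\<lambda>\<epsilon>. \<Prod>m=1..n. A m \<epsilon>) (prodC_h n hA) (prodC_k n hA kA)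
    (prodC_delta n hA kA \<delta>A) (prodC_G n hA kA \<delta>A GA epsA a) (prodC_eps n epsA) (prodC_coef n hA kA a)"
proof -
  let ?I = "{1..n}"
  define hC kC \<delta>C eC
    where "hC = prodC_h n hA" and "kC = prodC_k n hA kA" and "\<delta>C = prodC_delta n hA kA \<delta>A"
      and "eC = prodC_eps n epsA"
  have I: "finite ?I" "?I \<noteq> {}"
    using assms(1) by auto
  have par: "hA m \<le> kA m \<and> 0 < \<delta>A m \<and> \<delta>A m \<le> 1 \<and> 0 < GA m \<and> 0 < epsA m \<and> epsA m \<le> eps0"
    if "m \<in> ?I" for m
    using exp that by (simp add: expansion_def)
  have eC_le: "\<forall>m\<in>?I. eC \<le> epsA m"
    by (simp add: eC_def prodC_eps_def)
  have "eC \<in> epsA ` ?I"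
    unfolding eC_def prodC_eps_def using I by simp
  then have eC: "0 < eC" "eC \<le> eps0"
    using par by auto
  have hC_le_kC: "hC \<le> kC"
    unfolding hC_def kC_def using assms(1) par by (intro prodC_h_le_prodC_k) auto
  have \<delta>C: "0 < \<delta>C" "\<delta>C \<le> 1"
    unfolding \<delta>C_def prodC_delta_eq_leading_delta
    using leading_delta_bounds[OF I, where \<delta> = \<delta>A and \<kappa> = "prodC_order n hA kA"] par by auto
  have order_le: "\<forall>j\<in>?I. of_int kC + \<delta>C \<le> of_int (\<Sum>r\<in>?I - {j}. hA r) + (of_int (kA j) + \<delta>A j)"
    using Min_add_leading_delta_le[OF I(1), of _ \<delta>A "prodC_order n hA kA"] par
    unfolding kC_def \<delta>C_def prodC_delta_eq_leading_delta prodC_k_eq_Min_prodC_order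
    by (auto simp: prodC_order_def add_ac)
  have "0 < prodC_G n hA kA \<delta>A GA epsA a"
    unfolding prodC_G_def Let_def kC_def[symmetric] \<delta>C_def[symmetric] eC_def[symmetric]
    using I par eC
    by (intro add_nonneg_pos sum_nonneg sum_pos mult_nonneg_nonneg mult_pos_pos prod_nonneg prod_pos)
      auto
  then show ?thesis
    unfolding expansion_def
    using hC_le_kC \<delta>C eC prod_expansions_truncate_remainder_le[OF exp _ _ eC_le \<delta>C(2) order_le]
    by (simp add: hC_def kC_def \<delta>C_def eC_def prodC_G_def Let_def mult.commute)
qed

lemma comp_permutes_in_PiE:
  assumes "\<sigma> permutes I" "l \<in> PiE I B"
  shows "l \<circ> \<sigma> \<in> PiE I (B \<circ> \<sigma>)"
  using assms by (auto simp: PiE_iff extensional_def permutes_in_image permutes_not_in)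

lemma bij_betw_comp_permutes_PiE:
  assumes "\<sigma> permutes I"
  shows "bij_betw (\<lambda>l. l \<circ> \<sigma>) (PiE I B) (PiE I (B \<circ> \<sigma>))"
proof (rule bij_betw_byWitness[where f' = "\<lambda>l. l \<circ> inv \<sigma>"])
  have inv: "inv \<sigma> permutes I" "\<sigma> \<circ> inv \<sigma> = id" "inv \<sigma> \<circ> \<sigma> = id"
    using assms by (simp_all add: permutes_inv permutes_inv_o)
  show "\<forall>l\<in>PiE I B. l \<circ> \<sigma> \<circ> inv \<sigma> = l" "\<forall>l\<in>PiE I (B \<circ> \<sigma>). l \<circ> inv \<sigma> \<circ> \<sigma> = l"
    using inv by (simp_all add: comp_assoc)
  show "(\<lambda>l. l \<circ> \<sigma>) ` PiE I B \<subseteq> PiE I (B \<circ> \<sigma>)"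
    using comp_permutes_in_PiE[OF assms] by blast
  show "(\<lambda>l. l \<circ> inv \<sigma>) ` PiE I (B \<circ> \<sigma>) \<subseteq> PiE I B"
    using comp_permutes_in_PiE[OF inv(1), of _ "B \<circ> \<sigma>"] inv(2) by (auto simp: comp_assoc)
qed

lemma permutes_image_Diff_singleton: "\<sigma> permutes I \<Longrightarrow> \<sigma> ` (I - {l}) = I - {\<sigma> l}"
  by (simp add: image_set_diff permutes_inj permutes_image)

lemma sum_Diff_singleton_permutes:
  "\<sigma> permutes I \<Longrightarrow> (\<Sum>r\<in>I - {l}. f (\<sigma> r)) = (\<Sum>r\<in>I - {\<sigma> l}. f r)"
  by (metis (no_types, lifting) inj_on_subset permutes_image_Diff_singleton permutes_inj_on
      subset_UNIV sum.reindex_cong)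

lemma prod_Diff_singleton_permutes:
  "\<sigma> permutes I \<Longrightarrow> (\<Prod>r\<in>I - {l}. f (\<sigma> r)) = (\<Prod>r\<in>I - {\<sigma> l}. f r)"
  by (metis (no_types, lifting) inj_on_subset permutes_image_Diff_singleton permutes_inj_on
      subset_UNIV prod.reindex_cong)

lemma sum_tuples_permute:
  assumes "\<sigma> permutes {1..n}"
  shows "(\<Sum>l\<in>tuples n (hA \<circ> \<sigma>) (kA \<circ> \<sigma>). f (l \<circ> inv \<sigma>)) = (\<Sum>l\<in>tuples n hA kA. f l)"
proof -
  have "tuples n (hA \<circ> \<sigma>) (kA \<circ> \<sigma>) = PiE {1..n} ((\<lambda>i. {hA i..kA i}) \<circ> \<sigma>)"
    by (simp add: tuples_def comp_def)
  then show ?thesis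
    using sum.reindex_bij_betw[OF bij_betw_comp_permutes_PiE[OF assms], of "\<lambda>l. f (l \<circ> inv \<sigma>)"]
    by (simp add: tuples_def comp_assoc permutes_inv_o[OF assms])
qed

lemma prodC_order_permute:
  "\<sigma> permutes {1..n} \<Longrightarrow> prodC_order n (hA \<circ> \<sigma>) (kA \<circ> \<sigma>) = prodC_order n hA kA \<circ> \<sigma>"
  by (simp add: fun_eq_iff prodC_order_def sum_Diff_singleton_permutes)

lemma sumB_eps_permute: "\<sigma> permutes {1..n} \<Longrightarrow> sumB_eps n (epsA \<circ> \<sigma>) = sumB_eps n epsA"
  by (simp only: sumB_eps_def image_comp_permutes)

lemma prodC_eps_permute: "\<sigma> permutes {1..n} \<Longrightarrow> prodC_eps n (epsA \<circ> \<sigma>) = prodC_eps n epsA"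
  by (simp only: prodC_eps_def image_comp_permutes)

lemma sumB_k_permute: "\<sigma> permutes {1..n} \<Longrightarrow> sumB_k n (kA \<circ> \<sigma>) = sumB_k n kA"
  by (simp only: sumB_k_def image_comp_permutes)

lemma prodC_k_permute: "\<sigma> permutes {1..n} \<Longrightarrow> prodC_k n (hA \<circ> \<sigma>) (kA \<circ> \<sigma>) = prodC_k n hA kA"
  by (simp only: prodC_k_eq_Min_prodC_order prodC_order_permute image_comp_permutes)

lemma sumB_delta_permute:
  "\<sigma> permutes {1..n} \<Longrightarrow> sumB_delta n (kA \<circ> \<sigma>) (\<delta>A \<circ> \<sigma>) = sumB_delta n kA \<delta>A"
  by (simp add: sumB_delta_eq_leading_delta leading_delta_permute)

lemma prodC_delta_permute:
  "\<sigma> permutes {1..n} \<Longrightarrow> prodC_delta n (hA \<circ> \<sigma>) (kA \<circ> \<sigma>) (\<delta>A \<circ> \<sigma>) = prodC_delta n hA kA \<delta>A"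
  by (simp add: prodC_delta_eq_leading_delta prodC_order_permute leading_delta_permute)

lemma sumB_G_permute:
  assumes "\<sigma> permutes {1..n}"
  shows "sumB_G n (hA \<circ> \<sigma>) (kA \<circ> \<sigma>) (\<delta>A \<circ> \<sigma>) (GA \<circ> \<sigma>) (epsA \<circ> \<sigma>) (a \<circ> \<sigma>)
    = sumB_G n hA kA \<delta>A GA epsA a"
  unfolding sumB_G_def Let_def sumB_k_permute[OF assms] sumB_delta_permute[OF assms]
    sumB_eps_permute[OF assms]
  by (subst (2) sum.permute[OF assms]) (simp add: o_def)

lemma prodC_G_permute:
  assumes \<sigma>: "\<sigma> permutes {1..n}"
  shows "prodC_G n (hA \<circ> \<sigma>) (kA \<circ> \<sigma>) (\<delta>A \<circ> \<sigma>) (GA \<circ> \<sigma>) (epsA \<circ> \<sigma>) (a \<circ> \<sigma>)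
    = prodC_G n hA kA \<delta>A GA epsA a"
proof -
  let ?I = "{1..n}"
  define kC \<delta>C eC
    where "kC = prodC_k n hA kA" and "\<delta>C = prodC_delta n hA kA \<delta>A" and "eC = prodC_eps n epsA"
  define X where "X l = (if kC < (\<Sum>i\<in>?I. l i)
    then (\<Prod>i\<in>?I. \<bar>a i (l i)\<bar>) * eC powr (of_int (\<Sum>i\<in>?I. l i) - of_int kC - \<delta>C) else 0)" for l
  define F where "F i = (\<Sum>l=hA i..kA i. \<bar>a i l\<bar> * eC powr of_int l)
    + GA i * eC powr (of_int (kA i) + \<delta>A i)" for i
  define Y where "Y j = (\<Prod>i\<in>?I - {j}. F i) * GA j * eC powr (of_int (kA j) + \<delta>A j - of_int kC - \<delta>C)"
    for j
  have finite_tuples: "finite (tuples n hA' kA')" for hA' kA'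
    unfolding tuples_def by (intro finite_PiE) auto
  have X_comp_inv: "X (l \<circ> inv \<sigma>) = (if kC < (\<Sum>i\<in>?I. l i)
      then (\<Prod>i\<in>?I. \<bar>a (\<sigma> i) (l i)\<bar>) * eC powr (of_int (\<Sum>i\<in>?I. l i) - of_int kC - \<delta>C) else 0)"
    for l :: "nat \<Rightarrow> int"
    unfolding X_def
    using sum.permute[OF permutes_inv[OF \<sigma>], of l]
      prod.permute[OF permutes_inv[OF \<sigma>], of "\<lambda>i. \<bar>a (\<sigma> i) (l i)\<bar>"]
    by (simp add: o_def permutes_inverses(1)[OF \<sigma>])
  have "(\<Sum>l\<in>{l \<in> tuples n (hA \<circ> \<sigma>) (kA \<circ> \<sigma>). kC < (\<Sum>i\<in>?I. l i)}.
        (\<Prod>i\<in>?I. \<bar>a (\<sigma> i) (l i)\<bar>) * eC powr (of_int (\<Sum>i\<in>?I. l i) - of_int kC - \<delta>C))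
      = (\<Sum>l\<in>tuples n (hA \<circ> \<sigma>) (kA \<circ> \<sigma>). X (l \<circ> inv \<sigma>))" (is "?high' = _")
    unfolding X_comp_inv by (rule sum.inter_filter[OF finite_tuples])
  also have "\<dots> = (\<Sum>l\<in>tuples n hA kA. X l)"
    by (rule sum_tuples_permute[OF \<sigma>])
  also have "\<dots> = (\<Sum>l\<in>{l \<in> tuples n hA kA. kC < (\<Sum>i\<in>?I. l i)}.
        (\<Prod>i\<in>?I. \<bar>a i (l i)\<bar>) * eC powr (of_int (\<Sum>i\<in>?I. l i) - of_int kC - \<delta>C))"
    (is "_ = ?high")
    unfolding X_def by (rule sum.inter_filter[OF finite_tuples, symmetric])
  finally have high: "?high' = ?high" .
  have "(\<Sum>j\<in>?I. (\<Prod>i\<in>?I - {j}. F (\<sigma> i)) * GA (\<sigma> j)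
      * eC powr (of_int (kA (\<sigma> j)) + \<delta>A (\<sigma> j) - of_int kC - \<delta>C)) = (\<Sum>j\<in>?I. (Y \<circ> \<sigma>) j)"
    (is "?rest' = _")
    unfolding prod_Diff_singleton_permutes[OF \<sigma>] Y_def o_def ..
  also have "\<dots> = (\<Sum>j\<in>?I. Y j)"
    by (rule sum.permute[OF \<sigma>, symmetric])
  finally have rest: "?rest' = (\<Sum>j\<in>?I. Y j)" .
  show ?thesis
    unfolding prodC_G_def Let_def prodC_k_permute[OF \<sigma>] prodC_delta_permute[OF \<sigma>]
      prodC_eps_permute[OF \<sigma>] kC_def[symmetric] \<delta>C_def[symmetric] eC_def[symmetric] o_apply
      F_def[symmetric] high rest Y_def ..
qed

lemma Min_le_sumB_delta: "1 \<le> n \<Longrightarrow> Min (\<delta>A ` {1..n}) \<le> sumB_delta n kA \<delta>A"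
  by (simp add: sumB_delta_eq_leading_delta Min_le_leading_delta)

lemma Min_le_prodC_delta: "1 \<le> n \<Longrightarrow> Min (\<delta>A ` {1..n}) \<le> prodC_delta n hA kA \<delta>A"
  by (simp add: prodC_delta_eq_leading_delta Min_le_leading_delta)

theorem lemma3:
  fixes eps0 :: real and N :: nat and A :: "nat \<Rightarrow> real \<Rightarrow> real"
    and hA kA :: "nat \<Rightarrow> int" and \<delta>A GA epsA :: "nat \<Rightarrow> real"
    and a :: "nat \<Rightarrow> int \<Rightarrow> real"
  assumes "0 < eps0" and "eps0 \<le> 1" and "1 \<le> N"
    and "\<forall>m\<in>{1..N}. expansion eps0 (A m) (hA m) (kA m) (\<delta>A m) (GA m) (epsA m) (a m)"
  shows "\<forall>n\<in>{1..N}.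
    expansion eps0 (\<lambda>\<epsilon>. \<Sum>m=1..n. A m \<epsilon>) (sumB_h n hA) (sumB_k n kA)
       (sumB_delta n kA \<delta>A) (sumB_G n hA kA \<delta>A GA epsA a) (sumB_eps n epsA) (sumB_coef n hA kA a)
    \<and> Min (\<delta>A ` {1..n}) \<le> sumB_delta n kA \<delta>A
    \<and> expansion eps0 (\<lambda>\<epsilon>. \<Prod>m=1..n. A m \<epsilon>) (prodC_h n hA) (prodC_k n hA kA)
       (prodC_delta n hA kA \<delta>A) (prodC_G n hA kA \<delta>A GA epsA a) (prodC_eps n epsA) (prodC_coef n hA kA a)
    \<and> Min (\<delta>A ` {1..n}) \<le> prodC_delta n hA kA \<delta>A
    \<and> (\<forall>\<sigma>. \<sigma> permutes {1..n} \<longrightarrow>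
         sumB_delta n (kA \<circ> \<sigma>) (\<delta>A \<circ> \<sigma>) = sumB_delta n kA \<delta>A
       \<and> sumB_G n (hA \<circ> \<sigma>) (kA \<circ> \<sigma>) (\<delta>A \<circ> \<sigma>) (GA \<circ> \<sigma>) (epsA \<circ> \<sigma>) (a \<circ> \<sigma>)
           = sumB_G n hA kA \<delta>A GA epsA a
       \<and> sumB_eps n (epsA \<circ> \<sigma>) = sumB_eps n epsA
       \<and> prodC_delta n (hA \<circ> \<sigma>) (kA \<circ> \<sigma>) (\<delta>A \<circ> \<sigma>) = prodC_delta n hA kA \<delta>A
       \<and> prodC_G n (hA \<circ> \<sigma>) (kA \<circ> \<sigma>) (\<delta>A \<circ> \<sigma>) (GA \<circ> \<sigma>) (epsA \<circ> \<sigma>) (a \<circ> \<sigma>)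
           = prodC_G n hA kA \<delta>A GA epsA a
       \<and> prodC_eps n (epsA \<circ> \<sigma>) = prodC_eps n epsA)"
  using assms(4)
  by (intro ballI conjI allI impI expansion_sum expansion_prod Min_le_sumB_delta Min_le_prodC_delta
      sumB_delta_permute sumB_G_permute sumB_eps_permute
      prodC_delta_permute prodC_G_permute prodC_eps_permute) auto

end
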